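(* Let $P=[0,1]$, let $l$ be a positive integer, $r=2^l-1$, $\sigma_r=\sum_{i=r+1}^{2r+1}\frac1i$, and $Q=\{q_1,\dots,q_r\}$ with $q_i=\frac{1}{\sigma_r}\sum_{j=r+1}^{r+i}\frac1j$. Then there exists an ordering $\tau$ of $Q$ such that the following online algorithm satisfies $OPT_A(S;P)\le 2\sigma_r\cdot\min_{t\le T}d_{min}(t;X)$ (with $X$ its output) for every instance $S$ whose maximum number $m$ of simultaneously present points satisfies $m\le r$. The algorithm maintains a set $\hat Q$ of positions ever used, each labelled occupied or vacant (initially empty); when a point departs its position becomes vacant; when a point arrives, if some position in $\hat Q$ is vacant the point is put at an arbitrary vacant position (now occupied); otherwise, if $Q\not\subseteq\hat Q$ the point is put at the first position of $Q\setminus\hat Q$ according to $\tau$, and if $Q\subseteq\hat Q$ it is put at the midpoint of a largest interval into which $[0,1]$ is divided by $\hat Q$; in both latter cases the new position is added to $\hat Q$ as occupied.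
   Context: Distances are Euclidean; $\partial P=\{0,1\}$. An instance is a sequence $S=((s_1,d_1),\dots,(s_n,d_n))$ with $s_i<d_i$, $0=s_1\le\dots\le s_n$; point $i$ is present at time $t$ iff $s_i\le t\le d_i$; $T=\max_i d_i$; $m=\max_{t\le T}|\{i:s_i\le t\le d_i\}|$. For locations $X=(X_1,\dots,X_n)\in P^n$, $d_{min}(t;X)=\min\{dis(X_i,\partial P),dis(X_i,X_j)\}$ over present points $i\ne j$ at time $t$, and $OPT_A(S;P)=\max_X\min_{t\le T}d_{min}(t;X)$. The algorithm is online: it places each arriving point irrevocably without knowing future events. *)

theory Defs
  imports Complex_Main
begin

(* An instance is a list of (arrival, departure) pairs; point i (i < length S)
   is present at time t iff s_i <= t <= d_i. *)

definition valid_instance :: "(real \<times> real) list \<Rightarrow> bool" where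
  "valid_instance S \<longleftrightarrow> S \<noteq> [] \<and> (\<forall>i<length S. fst (S!i) < snd (S!i))
     \<and> fst (S!0) = 0 \<and> sorted (map fst S)"

definition present :: "(real \<times> real) list \<Rightarrow> nat \<Rightarrow> real \<Rightarrow> bool" where
  "present S i t \<longleftrightarrow> fst (S!i) \<le> t \<and> t \<le> snd (S!i)"

definition horizon :: "(real \<times> real) list \<Rightarrow> real" where
  "horizon S = Max (snd ` set S)"

definition max_simul :: "(real \<times> real) list \<Rightarrow> nat" where
  "max_simul S = Max ((\<lambda>t. card {i. i < length S \<and> present S i t}) ` {t. t \<le> horizon S})"

definition dist_bd :: "real \<Rightarrow> real" where
  "dist_bd x = min (dist x 0) (dist x 1)"

(* d_min(t;X), for times t at which at least one point is present *)
definition d_min :: "(real \<times> real) list \<Rightarrow> (nat \<Rightarrow> real) \<Rightarrow> real \<Rightarrow> real" where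
  "d_min S X t = Min ({dist_bd (X i) | i. i < length S \<and> present S i t}
      \<union> {dist (X i) (X j) | i j. i < length S \<and> j < length S \<and> i \<noteq> j
                              \<and> present S i t \<and> present S j t})"

(* min_{t <= T} d_min(t;X); times with no present point contribute +infinity (ignored) *)
definition min_dmin :: "(real \<times> real) list \<Rightarrow> (nat \<Rightarrow> real) \<Rightarrow> real" where
  "min_dmin S X = Inf (d_min S X ` {t. t \<le> horizon S \<and> (\<exists>i<length S. present S i t)})"

definition OPT_A :: "(real \<times> real) list \<Rightarrow> real" where
  "OPT_A S = Sup (min_dmin S ` {X. \<forall>i<length S. X i \<in> {0..1}})"

definition sigma_r :: "nat \<Rightarrow> real" where
  "sigma_r r = (\<Sum>i = r+1..2*r+1. 1 / real i)"

definition qpos :: "nat \<Rightarrow> nat \<Rightarrow> real" where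
  "qpos r i = (1 / sigma_r r) * (\<Sum>j = r+1..r+i. 1 / real j)"

definition Qset :: "nat \<Rightarrow> real set" where
  "Qset r = qpos r ` {1..r}"

definition consec :: "real set \<Rightarrow> real \<Rightarrow> real \<Rightarrow> bool" where
  "consec H a b \<longleftrightarrow> a \<in> insert 0 (insert 1 H) \<and> b \<in> insert 0 (insert 1 H) \<and> a < b
     \<and> \<not> (\<exists>c \<in> insert 0 (insert 1 H). a < c \<and> c < b)"

definition largest_gap_mid :: "real set \<Rightarrow> real \<Rightarrow> bool" where
  "largest_gap_mid H x \<longleftrightarrow> (\<exists>a b. consec H a b \<and> x = (a + b) / 2
     \<and> (\<forall>a' b'. consec H a' b' \<longrightarrow> b' - a' \<le> b - a))"

(* X is a possible output of the online algorithm (with ordering tau of Q) on S.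
   Points arrive in index order.  When point i arrives, Qhat = positions used by
   points j < i; occupied = positions of points j < i still present at time s_i. *)
definition alg_run :: "real set \<Rightarrow> real list \<Rightarrow> (real \<times> real) list \<Rightarrow> (nat \<Rightarrow> real) \<Rightarrow> bool" where
  "alg_run Q tau S X \<longleftrightarrow> (\<forall>i<length S.
     (let H = X ` {..<i};
          Occ = X ` {j. j < i \<and> fst (S!i) \<le> snd (S!j)};
          V = H - Occ
      in (V \<noteq> {} \<longrightarrow> X i \<in> V)
       \<and> (V = {} \<and> \<not> Q \<subseteq> H \<longrightarrow> X i = hd (filter (\<lambda>q. q \<notin> H) tau))
       \<and> (V = {} \<and> Q \<subseteq> H \<longrightarrow> largest_gap_mid H (X i))))"

end

theory Submission imports Defs begin

text \<open>With \<open>r = 2^l - 1\<close>, the points \<open>0 < q\<^sub>1 < \<dots> < q\<^sub>r < 1\<close> cut \<open>[0,1]\<close> into gaps of lengths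
  proportional to \<open>1/(r+1), \<dots>, 1/(2r+1)\<close>; \<open>\<tau>\<close> lists them by repeated bisection of the index
  range \<open>{0, \<dots>, 2^l}\<close>.  If at most \<open>r\<close> points are ever present, an arriving point that finds no
  vacant position finds fewer than \<open>r\<close> used ones, so the algorithm only uses a prefix of \<open>\<tau>\<close>, and if
  that prefix has length \<open>K\<close> then \<open>K\<close> points were present at some moment, whence \<open>OPT \<le> 1/(K+1)\<close>.
  Conversely, any two of the first \<open>K\<close> positions of \<open>\<tau>\<close> (and the boundary) are separated by
  enough consecutive harmonic weights to be \<open>1/(2\<sigma>\<^sub>r(K+1))\<close> apart.\<close>

section \<open>Harmonic positions\<close>

lemma sum_inverse_shift: "(\<Sum>j = r+1..r+i. 1 / real j) = (\<Sum>j<i. 1 / real (r+1+j))"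
  by (induction i) (simp_all add: sum.cl_ivl_Suc)

lemma sigma_r_eq: "sigma_r r = (\<Sum>j<r+1. 1 / real (r+1+j))"
proof -
  have "2*r+1 = r+(r+1)" by simp
  then show ?thesis unfolding sigma_r_def by (simp only: sum_inverse_shift)
qed

lemma sigma_r_pos: "sigma_r r > 0"
  unfolding sigma_r_eq by (intro sum_pos) auto

lemma qpos_eq: "qpos r i = (\<Sum>j<i. 1 / real (r+1+j)) / sigma_r r"
  unfolding qpos_def sum_inverse_shift by simp

lemma qpos_0 [simp]: "qpos r 0 = 0"
  by (simp add: qpos_eq)

lemma qpos_top: "qpos r (r+1) = 1"
  using sigma_r_pos[of r] by (simp only: qpos_eq sigma_r_eq[symmetric]) simp

lemma qpos_diff_ge:
  assumes "x < c"
  shows "real (c - x) / (real (r + c) * sigma_r r) \<le> qpos r c - qpos r x"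
proof -
  have split: "(\<Sum>j<c. 1 / real (r+1+j)) = (\<Sum>j<x. 1 / real (r+1+j)) + (\<Sum>j\<in>{x..<c}. 1 / real (r+1+j))"
    using sum.atLeastLessThan_concat[of 0 x c "\<lambda>j. 1 / real (r+1+j)"] assms
    by (simp add: lessThan_atLeast0)
  have "real (card {x..<c}) * (1 / real (r+c)) \<le> (\<Sum>j\<in>{x..<c}. 1 / real (r+1+j))"
    by (rule sum_bounded_below) (auto simp: frac_le)
  then have "real (c - x) / real (r+c) \<le> (\<Sum>j\<in>{x..<c}. 1 / real (r+1+j))" by simp
  then show ?thesis using split sigma_r_pos[of r]
    by (simp add: qpos_eq divide_right_mono add_divide_distrib flip: divide_divide_eq_left)
qed

lemma strict_mono_qpos: "strict_mono (qpos r)"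
proof (rule strict_monoI)
  fix x y :: nat assume "x < y"
  then have "0 < real (y - x) / (real (r + y) * sigma_r r)" using sigma_r_pos[of r] by simp
  then show "qpos r x < qpos r y" using qpos_diff_ge[OF \<open>x < y\<close>, of r] by linarith
qed

section \<open>The bisection order\<close>

text \<open>Listing levels \<open>0, 1, \<dots>, l-1\<close> in turn enumerates \<open>{1..2^l-1}\<close> by repeated bisection;
  its image under \<open>qpos (2^l - 1)\<close> is the ordering \<open>\<tau>\<close>.\<close>

definition dyadic_level :: "nat \<Rightarrow> nat \<Rightarrow> nat list" where
  "dyadic_level l a = map (\<lambda>c. (2*c+1) * 2^(l-a-1)) [0..<2^a]"

definition dyadic_order :: "nat \<Rightarrow> nat \<Rightarrow> nat list" where
  "dyadic_order l a = concat (map (dyadic_level l) [0..<a])"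

lemma dyadic_order_Suc: "dyadic_order l (Suc a) = dyadic_order l a @ dyadic_level l a"
  by (simp add: dyadic_order_def)

lemma length_dyadic_level: "length (dyadic_level l a) = 2^a"
  by (simp add: dyadic_level_def)

lemma length_dyadic_order: "length (dyadic_order l a) = 2^a - 1"
proof (induction a)
  case 0 then show ?case by (simp add: dyadic_order_def)
next
  case (Suc a)
  have "(1::nat) \<le> 2^a" by simp
  then show ?case using Suc by (simp add: dyadic_order_Suc length_dyadic_level)
qed

lemma multiples_even_odd_split:
  fixes P A :: nat
  shows "(\<lambda>m. m*(2*P)) ` {m. 0<m \<and> m<A} \<union> (\<lambda>c. (2*c+1)*P) ` {..<A}
       = (\<lambda>m. m*P) ` {m. 0<m \<and> m<2*A}"
proof (intro equalityI subsetI)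
  fix x assume "x \<in> (\<lambda>m. m*(2*P)) ` {m. 0<m \<and> m<A} \<union> (\<lambda>c. (2*c+1)*P) ` {..<A}"
  then consider m where "0<m" "m<A" "x = (2*m)*P" | c where "c<A" "x = (2*c+1)*P" by auto
  then show "x \<in> (\<lambda>m. m*P) ` {m. 0<m \<and> m<2*A}"
  proof cases
    case (1 m) then show ?thesis by (intro image_eqI[of _ _ "2*m"]) auto
  next
    case (2 c) then show ?thesis by (intro image_eqI[of _ _ "2*c+1"]) auto
  qed
next
  fix x assume "x \<in> (\<lambda>m. m*P) ` {m. 0<m \<and> m<2*A}"
  then obtain m where m: "0<m" "m<2*A" "x = m*P" by auto
  show "x \<in> (\<lambda>m. m*(2*P)) ` {m. 0<m \<and> m<A} \<union> (\<lambda>c. (2*c+1)*P) ` {..<A}"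
  proof (cases "even m")
    case True
    then obtain m' where "m = 2*m'" by auto
    then show ?thesis using m by (intro UnI1 image_eqI[of _ _ m']) auto
  next
    case False
    then obtain c where "m = 2*c+1" using oddE by blast
    then show ?thesis using m by (intro UnI2 image_eqI[of _ _ c]) auto
  qed
qed

lemma set_dyadic_order:
  "a \<le> l \<Longrightarrow> set (dyadic_order l a) = (\<lambda>m. m * 2^(l-a)) ` {m. 0<m \<and> m<2^a}"
proof (induction a)
  case 0 then show ?case by (auto simp: dyadic_order_def)
next
  case (Suc a)
  then have IH: "set (dyadic_order l a) = (\<lambda>m. m * 2^(l-a)) ` {m. 0<m \<and> m<2^a}" by simp
  obtain e where e: "l - a = Suc e" "l - a - 1 = e" "l - Suc a = e" using Suc.prems
    by (metis Suc_diff_Suc Suc_le_lessD diff_Suc_1 diff_diff_left plus_1_eq_Suc)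
  have "set (dyadic_order l (Suc a))
      = (\<lambda>m. m*(2*2^e)) ` {m. 0<m \<and> m<2^a} \<union> (\<lambda>c. (2*c+1)*2^e) ` {..<2^a}"
    using IH e by (simp add: dyadic_order_Suc dyadic_level_def atLeast0LessThan)
  also have "\<dots> = (\<lambda>m. m*2^e) ` {m. 0<m \<and> m<2*2^a}" by (rule multiples_even_odd_split)
  finally show ?case using e by simp
qed

lemma set_dyadic_order_full: "set (dyadic_order l l) = {1..2^l - 1}"
proof -
  have "set (dyadic_order l l) = (\<lambda>m. m * 2^(l-l)) ` {m. 0<m \<and> m<2^l}"
    by (rule set_dyadic_order) simp
  also have "\<dots> = {1..2^l - 1}" by force
  finally show ?thesis .
qed

lemma distinct_dyadic_order: "distinct (dyadic_order l l)"
  by (rule card_distinct) (simp add: set_dyadic_order_full length_dyadic_order)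

lemma take_dyadic_order:
  assumes "a < l" "s \<le> 2^a"
  shows "take (2^a - 1 + s) (dyadic_order l l) = dyadic_order l a @ take s (dyadic_level l a)"
proof -
  have "[0..<l] = [0..<a] @ a # [Suc a..<l]"
    using assms upt_add_eq_append[of 0 a "l-a"] by (simp add: upt_conv_Cons)
  then have "dyadic_order l l = dyadic_order l a @ dyadic_level l a @ concat (map (dyadic_level l) [Suc a..<l])"
    by (simp add: dyadic_order_def)
  then show ?thesis using assms by (simp add: length_dyadic_order length_dyadic_level)
qed

lemma multiples_with_ends_eq:
  fixes M A s :: nat
  assumes "s \<le> A"
  shows "(\<lambda>m. m*(2*M)) ` {m. 0<m \<and> m<A} \<union> (\<lambda>c. (2*c+1)*M) ` {..<s} \<union> {0, 2*A*M}
       = (\<lambda>m. m*M) ` {m. m \<le> 2*A \<and> (even m \<or> m < 2*s)}"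
proof (intro equalityI subsetI)
  fix x assume "x \<in> (\<lambda>m. m*(2*M)) ` {m. 0<m \<and> m<A} \<union> (\<lambda>c. (2*c+1)*M) ` {..<s} \<union> {0, 2*A*M}"
  then show "x \<in> (\<lambda>m. m*M) ` {m. m \<le> 2*A \<and> (even m \<or> m < 2*s)}"
  proof (elim UnE)
    assume "x \<in> (\<lambda>m. m*(2*M)) ` {m. 0<m \<and> m<A}"
    then obtain m where "m < A" "x = m*(2*M)" by auto
    then show ?thesis by (intro image_eqI[of _ _ "2*m"]) auto
  next
    assume "x \<in> (\<lambda>c. (2*c+1)*M) ` {..<s}"
    then obtain c where "c < s" "x = (2*c+1)*M" by auto
    then show ?thesis using assms by (intro image_eqI[of _ _ "2*c+1"]) auto
  next
    assume "x \<in> {0, 2*A*M}"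
    then show ?thesis by (auto intro: image_eqI[of _ _ 0] image_eqI[of _ _ "2*A"])
  qed
next
  fix x assume "x \<in> (\<lambda>m. m*M) ` {m. m \<le> 2*A \<and> (even m \<or> m < 2*s)}"
  then obtain m where m: "m \<le> 2*A" "even m \<or> m < 2*s" "x = m*M" by auto
  show "x \<in> (\<lambda>m. m*(2*M)) ` {m. 0<m \<and> m<A} \<union> (\<lambda>c. (2*c+1)*M) ` {..<s} \<union> {0, 2*A*M}"
  proof (cases "even m")
    case True
    then obtain m' where m': "m = 2*m'" by auto
    then consider "m' = 0" | "m' = A" | "0 < m'" "m' < A" using m by linarith
    then show ?thesis using m m' by cases (auto intro: image_eqI[of _ _ m'])
  next
    case False
    then obtain c where c: "m = 2*c+1" using oddE by blast
    then have "c < s" using m False by auto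
    then show ?thesis using m c by (intro UnI1 UnI2 image_eqI[of _ _ c]) auto
  qed
qed

lemma dyadic_prefix_with_ends:
  assumes "a < l" "s \<le> 2^a"
  shows "set (take (2^a - 1 + s) (dyadic_order l l)) \<union> {0, 2^l}
       = (\<lambda>m. m * 2^(l-a-1)) ` {m. m \<le> 2*2^a \<and> (even m \<or> m < 2*s)}"
proof -
  define M where "M = (2::nat)^(l-a-1)"
  have M2: "(2::nat)^(l-a) = 2*M"
    unfolding M_def using assms(1) by (simp flip: power_Suc)
  have "(2::nat)^l = 2^a * 2^(l-a)" using assms(1) by (simp flip: power_add)
  then have N: "(2::nat)^l = 2*2^a*M" using M2 by simp
  have "set (take (2^a - 1 + s) (dyadic_order l l)) = set (dyadic_order l a) \<union> set (take s (dyadic_level l a))"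
    using take_dyadic_order[OF assms] by simp
  also have "\<dots> = (\<lambda>m. m*(2*M)) ` {m. 0<m \<and> m<2^a} \<union> (\<lambda>c. (2*c+1)*M) ` {..<s}"
    using set_dyadic_order[of a l] assms M2
    by (simp add: dyadic_level_def take_map M_def min_def atLeast0LessThan)
  finally show ?thesis using multiples_with_ends_eq[OF assms(2), of M] N by (simp add: M_def)
qed

lemma exists_dyadic_bracket:
  fixes K l :: nat
  assumes "0 < l" "K < 2^l"
  shows "\<exists>a<l. 2^a \<le> K+1 \<and> K+1 \<le> 2^(a+1)"
proof (cases "K = 0")
  case True then show ?thesis using assms(1) by auto
next
  case False
  then obtain a where a: "2^a \<le> K" "K < 2^(a+1)" using ex_power_ivl1[of 2 K] by auto
  then have "(2::nat)^a < 2^l" using assms(2) by linarith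
  then have "a < l" by simp
  then show ?thesis using a by auto
qed

lemma grid_step_exists:
  fixes A s x y :: nat
  assumes "s \<le> A"
    and "x \<le> 2*A" "even x \<or> x < 2*s"
    and "y \<le> 2*A" "even y \<or> y < 2*s"
    and "x < y"
  shows "\<exists>c. x < c \<and> c \<le> y \<and> 2*A + c \<le> 2*(A+s)*(c-x)"
proof (cases "x < 2*s")
  case True
  then show ?thesis using assms by (intro exI[of _ "x+1"]) auto
next
  case False
  then have "even x" using assms by auto
  then have "x + 2 \<le> y" using assms False by (cases "y = x + 1") auto
  then show ?thesis using \<open>even x\<close> assms False by (intro exI[of _ "x+2"]) auto
qed

text \<open>Above any used grid point \<open>x\<close> below \<open>v\<close> there is a used grid point \<open>c \<le> v\<close> so close that
  the \<open>c - x\<close> harmonic weights in between, each at least \<open>1/(r+c)\<close>, already make up the bound.\<close>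

lemma qpos_dyadic_prefix_gap:
  fixes l K u v :: nat
  defines "r \<equiv> 2^l - 1"
  assumes "0 < l" "K \<le> r"
    and "u \<in> set (take K (dyadic_order l l)) \<union> {0, 2^l}"
    and "v \<in> set (take K (dyadic_order l l)) \<union> {0, 2^l}"
    and "u < v"
  shows "1 / (2 * sigma_r r * real (K+1)) \<le> qpos r v - qpos r u"
proof -
  have "(1::nat) \<le> 2^l" by simp
  then have "K < 2^l" using \<open>K \<le> r\<close> unfolding r_def by linarith
  then obtain a where a: "a < l" "2^a \<le> K+1" "K+1 \<le> 2^(a+1)"
    using exists_dyadic_bracket[OF \<open>0 < l\<close>] by blast
  define s where "s = K + 1 - 2^a"
  define A where "A = (2::nat)^a"
  define M where "M = (2::nat)^(l-a-1)"
  have sA: "s \<le> A" and K: "K = 2^a - 1 + s" using a by (simp_all add: s_def A_def)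
  have "l = (a+1) + (l-a-1)" using a by simp
  then have "(2::nat)^l = 2^(a+1) * 2^(l-a-1)" by (metis power_add)
  then have r: "r + 1 = 2*A*M" unfolding r_def A_def M_def by simp
  have M: "M > 0" by (simp add: M_def)
  let ?G = "{m. m \<le> 2*A \<and> (even m \<or> m < 2*s)}"
  have "set (take K (dyadic_order l l)) \<union> {0, 2^l} = (\<lambda>m. m*M) ` ?G"
    using dyadic_prefix_with_ends[OF a(1), of s] sA unfolding K A_def M_def by simp
  then have "u \<in> (\<lambda>m. m*M) ` ?G" "v \<in> (\<lambda>m. m*M) ` ?G" using assms(4,5) by blast+
  then obtain x y where xy: "x \<le> 2*A" "even x \<or> x < 2*s" "y \<le> 2*A" "even y \<or> y < 2*s"
      "u = x*M" "v = y*M"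
    by auto
  have "x < y" using xy \<open>u < v\<close> M by auto
  obtain c where c: "x < c" "c \<le> y" "2*A + c \<le> 2*(A+s)*(c-x)"
    using grid_step_exists[OF sA xy(1-4) \<open>x < y\<close>] by blast
  have "(2*A + c)*M \<le> 2*(A+s)*(c-x)*M" using c by simp
  then have "r + c*M \<le> 2*(K+1)*(c*M - x*M)"
    using r a by (simp add: K A_def algebra_simps diff_mult_distrib)
  then have "real (r + c*M) \<le> 2 * real (K+1) * real (c*M - x*M)"
    by (metis of_nat_mono of_nat_mult of_nat_numeral)
  moreover have "0 < real (r + c*M)" using c M by (simp del: of_nat_add)
  ultimately have "1 / (2 * sigma_r r * real (K+1)) \<le> real (c*M - x*M) / (real (r + c*M) * sigma_r r)"
    using sigma_r_pos[of r] by (simp add: divide_simps mult_right_mono mult.commute mult.left_commute)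
  also have "\<dots> \<le> qpos r (c*M) - qpos r (x*M)"
    using c M by (intro qpos_diff_ge) simp
  also have "\<dots> \<le> qpos r v - qpos r u"
    using c M strict_mono_qpos[of r] by (simp add: xy strict_mono_less_eq)
  finally show ?thesis .
qed

text \<open>Since no \<open>K\<close> points of \<open>[0,1]\<close> can keep distance more than \<open>1/(K+1)\<close> from each other and
  from the boundary, an ordering with this property makes the online algorithm \<open>c\<close>-competitive.\<close>

definition prefix_separated :: "real \<Rightarrow> real list \<Rightarrow> bool" where
  "prefix_separated c tau \<longleftrightarrow> (\<forall>K \<le> length tau. \<forall>p \<in> set (take K tau).
      1 / (c * real (K+1)) \<le> dist_bd p
    \<and> (\<forall>q \<in> set (take K tau). p \<noteq> q \<longrightarrow> 1 / (c * real (K+1)) \<le> dist p q))"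

lemma prefix_separated_bisection:
  fixes l :: nat
  defines "r \<equiv> 2^l - 1"
  assumes "0 < l"
  shows "prefix_separated (2 * sigma_r r) (map (qpos r) (dyadic_order l l))"
  unfolding prefix_separated_def
proof (intro allI impI ballI conjI)
  fix K p assume K: "K \<le> length (map (qpos r) (dyadic_order l l))"
    and p: "p \<in> set (take K (map (qpos r) (dyadic_order l l)))"
  let ?d = "1 / (2 * sigma_r r * real (K+1))"
  have Kr: "K \<le> r" using K by (simp add: length_dyadic_order r_def)
  note gap = qpos_dyadic_prefix_gap[OF \<open>0 < l\<close> Kr[unfolded r_def], folded r_def]
  obtain u where u: "u \<in> set (take K (dyadic_order l l))" "p = qpos r u"
    using p by (auto simp: take_map)
  have "0 < u" "u < 2^l"
    using in_set_takeD[OF u(1)] unfolding set_dyadic_order_full by auto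
  then have "?d \<le> qpos r u - qpos r 0" "?d \<le> qpos r (2^l) - qpos r u"
    using gap[of 0 u] gap[of u "2^l"] u(1) by simp_all
  moreover have "qpos r (2^l) = 1" using qpos_top[of r] by (simp add: r_def)
  ultimately show "?d \<le> dist_bd p" unfolding dist_bd_def dist_real_def u(2) by (simp add: abs_if)
  fix q assume q: "q \<in> set (take K (map (qpos r) (dyadic_order l l)))" and "p \<noteq> q"
  then obtain v where v: "v \<in> set (take K (dyadic_order l l))" "q = qpos r v"
    by (auto simp: take_map)
  then have "u \<noteq> v" using u \<open>p \<noteq> q\<close> by blast
  then consider "u < v" | "v < u" by linarith
  then show "?d \<le> dist p q"
  proof cases
    case 1 then show ?thesis using gap[of u v] u v by (simp add: dist_real_def abs_if)
  next
    case 2 then show ?thesis using gap[of v u] u v by (simp add: dist_real_def abs_if)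
  qed
qed

section \<open>Instances and the offline optimum\<close>

definition num_present :: "(real \<times> real) list \<Rightarrow> real \<Rightarrow> nat" where
  "num_present S t = card {i. i < length S \<and> present S i t}"

definition active_times :: "(real \<times> real) list \<Rightarrow> real set" where
  "active_times S = {t. t \<le> horizon S \<and> (\<exists>i<length S. present S i t)}"

lemma snd_le_horizon: "i < length S \<Longrightarrow> snd (S!i) \<le> horizon S"
  unfolding horizon_def by (intro Max_ge) auto

lemma arrival_le_horizon:
  "valid_instance S \<Longrightarrow> i < length S \<Longrightarrow> fst (S!i) \<le> horizon S"
  using snd_le_horizon[of i S] unfolding valid_instance_def by force

lemma present_at_arrival: "valid_instance S \<Longrightarrow> i < length S \<Longrightarrow> present S i (fst (S!i))"
  unfolding valid_instance_def present_def by force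

lemma arrival_mono:
  "valid_instance S \<Longrightarrow> i \<le> j \<Longrightarrow> j < length S \<Longrightarrow> fst (S!i) \<le> fst (S!j)"
  unfolding valid_instance_def using sorted_nth_mono[of "map fst S" i j] by auto

lemma horizon_nonneg: "valid_instance S \<Longrightarrow> 0 \<le> horizon S"
  using arrival_le_horizon[of S 0] unfolding valid_instance_def by simp

lemma active_times_nonempty: "valid_instance S \<Longrightarrow> active_times S \<noteq> {}"
  using horizon_nonneg[of S] present_at_arrival[of S 0] unfolding active_times_def valid_instance_def
  by auto

lemma num_present_le_max_simul: "t \<le> horizon S \<Longrightarrow> num_present S t \<le> max_simul S"
proof -
  assume t: "t \<le> horizon S"
  have "card {i. i < length S \<and> present S i t'} \<le> length S" for t'
    using card_mono[of "{..<length S}" "{i. i < length S \<and> present S i t'}"] by auto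
  then have "(\<lambda>t. card {i. i < length S \<and> present S i t}) ` {t. t \<le> horizon S} \<subseteq> {..length S}"
    by auto
  then have "finite ((\<lambda>t. card {i. i < length S \<and> present S i t}) ` {t. t \<le> horizon S})"
    by (rule finite_subset) simp
  then show ?thesis unfolding num_present_def max_simul_def using t by (intro Max_ge) auto
qed

lemma finite_d_min_candidates:
  "finite ({dist_bd (X i) | i. i < length S \<and> present S i t}
      \<union> {dist (X i) (X j) | i j. i < length S \<and> j < length S \<and> i \<noteq> j
                              \<and> present S i t \<and> present S j t})"
proof -
  have "{dist_bd (X i) | i. i < length S \<and> present S i t} \<subseteq> (\<lambda>i. dist_bd (X i)) ` {..<length S}"
    by auto
  moreover have "{dist (X i) (X j) | i j. i < length S \<and> j < length S \<and> i \<noteq> j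
                              \<and> present S i t \<and> present S j t}
     \<subseteq> (\<lambda>(i,j). dist (X i) (X j)) ` ({..<length S} \<times> {..<length S})"
    by auto
  ultimately show ?thesis by (meson finite_SigmaI finite_UnI finite_imageI finite_lessThan finite_subset)
qed

lemma d_min_le_dist_bd: "i < length S \<Longrightarrow> present S i t \<Longrightarrow> d_min S X t \<le> dist_bd (X i)"
  unfolding d_min_def by (rule Min_le[OF finite_d_min_candidates]) auto

lemma d_min_le_dist:
  "\<lbrakk>i < length S; j < length S; i \<noteq> j; present S i t; present S j t\<rbrakk>
   \<Longrightarrow> d_min S X t \<le> dist (X i) (X j)"
  unfolding d_min_def
  by (rule Min_le[OF finite_d_min_candidates], rule UnI2, intro CollectI exI[of _ i] exI[of _ j]) simp

lemma d_min_greatest: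
  assumes "i0 < length S" "present S i0 t"
    and "\<And>i. i < length S \<Longrightarrow> present S i t \<Longrightarrow> v \<le> dist_bd (X i)"
    and "\<And>i j. \<lbrakk>i < length S; j < length S; i \<noteq> j; present S i t; present S j t\<rbrakk>
          \<Longrightarrow> v \<le> dist (X i) (X j)"
  shows "v \<le> d_min S X t"
  unfolding d_min_def
proof (rule Min.boundedI[OF finite_d_min_candidates])
  show "{dist_bd (X i) | i. i < length S \<and> present S i t}
      \<union> {dist (X i) (X j) | i j. i < length S \<and> j < length S \<and> i \<noteq> j
                              \<and> present S i t \<and> present S j t} \<noteq> {}"
    using assms(1,2) by auto
qed (use assms(3,4) in auto)

lemma d_min_nonneg: "i0 < length S \<Longrightarrow> present S i0 t \<Longrightarrow> 0 \<le> d_min S X t"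
  by (rule d_min_greatest[of i0]) (auto simp: dist_bd_def)

lemma min_dmin_le_d_min: "t \<in> active_times S \<Longrightarrow> min_dmin S X \<le> d_min S X t"
  unfolding min_dmin_def active_times_def[symmetric]
proof (rule cInf_lower)
  show "bdd_below (d_min S X ` active_times S)"
    by (rule bdd_belowI[of _ 0]) (auto simp: active_times_def intro: d_min_nonneg)
qed simp

lemma min_dmin_greatest:
  assumes "active_times S \<noteq> {}" "\<And>t. t \<in> active_times S \<Longrightarrow> v \<le> d_min S X t"
  shows "v \<le> min_dmin S X"
  unfolding min_dmin_def active_times_def[symmetric]
  using assms by (intro cInf_greatest) auto

lemma OPT_A_least:
  assumes "\<And>Y. \<forall>i<length S. Y i \<in> {0..1} \<Longrightarrow> min_dmin S Y \<le> b"
  shows "OPT_A S \<le> b"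
  unfolding OPT_A_def
proof (rule cSup_least)
  have "min_dmin S (\<lambda>_. 0) \<in> min_dmin S ` {X. \<forall>i<length S. X i \<in> {0..1}}" by simp
  then show "min_dmin S ` {X. \<forall>i<length S. X i \<in> {0..1}} \<noteq> {}" by blast
next
  fix z assume "z \<in> min_dmin S ` {X. \<forall>i<length S. X i \<in> {0..1}}"
  then obtain Y where "\<forall>i<length S. Y i \<in> {0..1}" "z = min_dmin S Y"
    by (auto simp del: atLeastAtMost_iff)
  then show "z \<le> b" using assms by simp
qed

lemma separated_points_card_bound:
  fixes F :: "real set" and a b D :: real
  assumes "finite F" "\<And>x. x \<in> F \<Longrightarrow> D \<le> x - a \<and> D \<le> b - x"
    and "\<And>x y. x \<in> F \<Longrightarrow> y \<in> F \<Longrightarrow> x \<noteq> y \<Longrightarrow> D \<le> \<bar>x - y\<bar>"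
    and "D \<le> b - a"
  shows "real (card F + 1) * D \<le> b - a"
  using assms
proof (induction "card F" arbitrary: F b)
  case 0
  then show ?case by simp
next
  case (Suc n)
  define x where "x = Max F"
  have "F \<noteq> {}" using Suc.hyps(2) by auto
  then have xF: "x \<in> F" and x_max: "\<And>y. y \<in> F \<Longrightarrow> y \<le> x"
    using Suc.prems(1) by (simp_all add: x_def)
  have IH: "real (card (F - {x}) + 1) * D \<le> x - a"
  proof (rule Suc.hyps(1))
    fix y assume "y \<in> F - {x}"
    then have "y \<in> F" "y \<noteq> x" by auto
    then have "D \<le> \<bar>y - x\<bar>" "y \<le> x" "D \<le> y - a"
      using Suc.prems(2)[of y] Suc.prems(3)[of y x] xF x_max by auto
    then show "D \<le> y - a \<and> D \<le> x - y" by simp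
  qed (use Suc.prems Suc.hyps(2) xF in auto)
  have "card F = card (F - {x}) + 1" using Suc.prems(1) Suc.hyps(2) xF by simp
  then have "real (card F + 1) * D = real (card (F - {x}) + 1) * D + D" by (simp add: algebra_simps)
  also have "\<dots> \<le> (x - a) + (b - x)" using IH Suc.prems(2)[OF xF] by linarith
  finally show ?case by simp
qed

lemma ex_present_if_num_present_pos: "0 < num_present S t \<Longrightarrow> \<exists>i<length S. present S i t"
  unfolding num_present_def by (metis (no_types, lifting) card.empty empty_Collect_eq less_irrefl)

lemma d_min_num_present_bound:
  fixes Y :: "nat \<Rightarrow> real"
  assumes Y: "\<forall>i<length S. Y i \<in> {0..1}" and "0 < num_present S t"
  shows "real (num_present S t + 1) * d_min S Y t \<le> 1"
proof -
  define P where "P = {i. i < length S \<and> present S i t}"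
  define D where "D = d_min S Y t"
  obtain i0 where i0: "i0 < length S" "present S i0 t"
    using ex_present_if_num_present_pos[OF \<open>0 < num_present S t\<close>] by blast
  have D0: "0 \<le> D" unfolding D_def using d_min_nonneg[OF i0] .
  show ?thesis
  proof (cases "inj_on Y P")
    case False
    then obtain i j where "i \<in> P" "j \<in> P" "i \<noteq> j" "Y i = Y j" unfolding inj_on_def by blast
    then have "D \<le> 0" using d_min_le_dist[of i S j t Y] unfolding D_def P_def by auto
    then show ?thesis using D0 by (simp add: D_def)
  next
    case True
    have "real (card (Y ` P) + 1) * D \<le> 1 - 0"
    proof (rule separated_points_card_bound)
      fix x assume "x \<in> Y ` P"
      then obtain i where "i \<in> P" "x = Y i" by blast
      then show "D \<le> x - 0 \<and> D \<le> 1 - x"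
        using d_min_le_dist_bd[of i S t Y] Y unfolding D_def P_def dist_bd_def dist_real_def by auto
    next
      fix x y assume "x \<in> Y ` P" "y \<in> Y ` P" "x \<noteq> y"
      then obtain i j where "i \<in> P" "j \<in> P" "i \<noteq> j" "x = Y i" "y = Y j" by blast
      then show "D \<le> \<bar>x - y\<bar>" using d_min_le_dist[of i S j t Y] unfolding D_def P_def dist_real_def by auto
    next
      show "D \<le> 1 - 0"
        using d_min_le_dist_bd[OF i0, of Y] Y i0(1) unfolding D_def dist_bd_def dist_real_def by auto
    qed (simp add: P_def)
    then show ?thesis using True unfolding D_def P_def num_present_def by (simp add: card_image)
  qed
qed

lemma OPT_A_le_num_present:
  assumes "t \<le> horizon S" "1 \<le> k" "k \<le> num_present S t"
  shows "OPT_A S \<le> 1 / real (k+1)"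
proof (rule OPT_A_least)
  fix Y :: "nat \<Rightarrow> real" assume Y: "\<forall>i<length S. Y i \<in> {0..1}"
  have "0 < num_present S t" using assms by simp
  then obtain i0 where i0: "i0 < length S" "present S i0 t"
    using ex_present_if_num_present_pos by blast
  then have "t \<in> active_times S" using assms(1) by (auto simp: active_times_def)
  have "real (k+1) * d_min S Y t \<le> real (num_present S t + 1) * d_min S Y t"
    using assms d_min_nonneg[OF i0] by (intro mult_right_mono) auto
  also have "\<dots> \<le> 1" using d_min_num_present_bound[OF Y \<open>0 < num_present S t\<close>] .
  finally have "d_min S Y t \<le> 1 / real (k+1)" by (simp add: field_simps)
  then show "min_dmin S Y \<le> 1 / real (k+1)"
    using min_dmin_le_d_min[OF \<open>t \<in> active_times S\<close>, of Y] by linarith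
qed

section \<open>The online algorithm\<close>

text \<open>The occupying points and point \<open>i\<close> itself are all present at the arrival time of \<open>i\<close>.\<close>

lemma num_present_ge_if_occupied:
  assumes S: "valid_instance S" and i: "i < length S"
    and occupied: "X ` {..<i} \<subseteq> X ` {j. j < i \<and> fst (S!i) \<le> snd (S!j)}"
  shows "card (X ` {..<i}) + 1 \<le> num_present S (fst (S!i))"
proof -
  define J where "J = {j. j < i \<and> fst (S!i) \<le> snd (S!j)}"
  have "card (X ` {..<i}) \<le> card (X ` J)"
    using card_mono[OF _ occupied] unfolding J_def by simp
  also have "\<dots> \<le> card J" by (rule card_image_le) (simp add: J_def)
  also have "\<dots> + 1 = card (insert i J)" by (simp add: J_def)
  also have "\<dots> \<le> num_present S (fst (S!i))"
    unfolding num_present_def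
  proof (intro card_mono subsetI)
    fix j assume "j \<in> insert i J"
    then show "j \<in> {j. j < length S \<and> present S j (fst (S!i))}"
      using present_at_arrival[OF S i] arrival_mono[OF S, of j i] i unfolding J_def present_def by auto
  qed simp
  finally show ?thesis by simp
qed

lemma nth_notin_set_take:
  assumes "distinct xs" "k < length xs"
  shows "xs!k \<notin> set (take k xs)"
proof -
  have "distinct (take k xs @ xs!k # drop (Suc k) xs)"
    using assms by (simp add: id_take_nth_drop[symmetric])
  then show ?thesis by simp
qed

lemma hd_filter_notin_take:
  assumes "distinct xs" "k < length xs"
  shows "hd (filter (\<lambda>q. q \<notin> set (take k xs)) xs) = xs!k"
proof -
  have xs: "xs = take k xs @ xs!k # drop (Suc k) xs" using assms(2) by (simp add: id_take_nth_drop)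
  have "filter (\<lambda>q. q \<notin> set (take k xs)) (take k xs) = []" by (simp add: filter_empty_conv)
  then show ?thesis
    using nth_notin_set_take[OF assms] by (subst xs) simp
qed

context
  fixes S :: "(real \<times> real) list" and X :: "nat \<Rightarrow> real" and tau :: "real list"
  assumes S: "valid_instance S" and simul: "max_simul S \<le> length tau"
    and run: "alg_run (set tau) tau S X" and tau: "distinct tau"
begin

text \<open>The midpoint rule never fires: an arriving point that finds no vacant position finds at
  most \<open>|\<tau>| - 1\<close> used ones, because all of them and the new point are present at once.\<close>

lemma alg_run_step:
  assumes i: "i < length S" and used: "X ` {..<i} = set (take k tau)" and k: "k \<le> length tau"
  shows "X i \<notin> X ` {j. j < i \<and> fst (S!i) \<le> snd (S!j)}
     \<and> (X i \<in> X ` {..<i} \<or> (k < length tau \<and> X i = tau!k \<and> k+1 \<le> num_present S (fst (S!i))))"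
proof -
  define H where "H = X ` {..<i}"
  define Occ where "Occ = X ` {j. j < i \<and> fst (S!i) \<le> snd (S!j)}"
  have rule: "(H - Occ \<noteq> {} \<longrightarrow> X i \<in> H - Occ)
       \<and> (H - Occ = {} \<and> \<not> set tau \<subseteq> H \<longrightarrow> X i = hd (filter (\<lambda>q. q \<notin> H) tau))"
    using run i unfolding alg_run_def Let_def H_def Occ_def by blast
  show ?thesis
  proof (cases "H - Occ = {}")
    case False
    then show ?thesis using rule unfolding H_def Occ_def by auto
  next
    case True
    have card_H: "card H = k" using used tau k unfolding H_def by (simp add: distinct_card)
    have "H \<subseteq> Occ" using True by blast
    then have "k + 1 \<le> num_present S (fst (S!i))"
      using num_present_ge_if_occupied[OF S i, of X] card_H unfolding H_def Occ_def by simp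
    also have "\<dots> \<le> length tau"
      using num_present_le_max_simul[OF arrival_le_horizon[OF S i]] simul by simp
    finally have "k < length tau" by simp
    then have "\<not> set tau \<subseteq> H"
      using card_mono[of H "set tau"] card_H tau by (auto simp: H_def distinct_card)
    then have Xi: "X i = tau!k"
      using rule True hd_filter_notin_take[OF tau \<open>k < length tau\<close>] used unfolding H_def by simp
    have "X i \<notin> Occ"
      using Xi used nth_notin_set_take[OF tau \<open>k < length tau\<close>] unfolding Occ_def by auto
    then show ?thesis using Xi \<open>k < length tau\<close> \<open>k + 1 \<le> _\<close> unfolding Occ_def by simp
  qed
qed

lemma alg_run_used_prefix:
  "i \<le> length S \<Longrightarrow> \<exists>k \<le> length tau. X ` {..<i} = set (take k tau)
      \<and> (\<exists>t \<le> horizon S. k \<le> num_present S t)"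
proof (induction i)
  case 0
  show ?case using horizon_nonneg[OF S] by (intro exI[of _ 0]) auto
next
  case (Suc i)
  then obtain k t where k: "k \<le> length tau" "X ` {..<i} = set (take k tau)"
      "t \<le> horizon S" "k \<le> num_present S t"
    by auto
  have i: "i < length S" using Suc.prems by simp
  have used: "X ` {..<Suc i} = insert (X i) (X ` {..<i})" by (simp add: lessThan_Suc)
  from alg_run_step[OF i k(2,1)]
  consider "X i \<in> X ` {..<i}" | "k < length tau" "X i = tau!k" "k+1 \<le> num_present S (fst (S!i))"
    by blast
  then show ?case
  proof cases
    case 1
    then show ?thesis using k used by (intro exI[of _ k]) auto
  next
    case 2
    then have "X ` {..<Suc i} = set (take (k+1) tau)"
      using used k by (simp add: take_Suc_conv_app_nth)
    then show ?thesis using 2 arrival_le_horizon[OF S i] by (intro exI[of _ "k+1"]) auto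
  qed
qed

lemma alg_run_present_distinct:
  assumes "i < length S" "j < length S" "i \<noteq> j" "present S i t" "present S j t"
  shows "X i \<noteq> X j"
proof -
  have *: "X i \<noteq> X j" if ij: "i < j" "j < length S" "present S i t" "present S j t" for i j
  proof -
    obtain k where "k \<le> length tau" "X ` {..<j} = set (take k tau)"
      using alg_run_used_prefix[of j] ij by auto
    then have "X j \<notin> X ` {i'. i' < j \<and> fst (S!j) \<le> snd (S!i')}"
      using alg_run_step[OF ij(2)] by blast
    moreover have "i \<in> {i'. i' < j \<and> fst (S!j) \<le> snd (S!i')}"
      using ij unfolding present_def by auto
    ultimately show ?thesis by (metis imageI)
  qed
  show ?thesis
    using *[of i j] *[of j i] assms by (cases "i < j") auto
qed

lemma alg_run_competitive:
  assumes sep: "prefix_separated c tau" and c: "0 < c"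
  shows "OPT_A S \<le> c * min_dmin S X"
proof -
  obtain K t where K: "K \<le> length tau" "X ` {..<length S} = set (take K tau)"
      "t \<le> horizon S" "K \<le> num_present S t"
    using alg_run_used_prefix[of "length S"] by auto
  have pos: "X i \<in> set (take K tau)" if "i < length S" for i using K(2) that by auto
  have "0 < length S" using S unfolding valid_instance_def by simp
  then have "1 \<le> K" using pos[of 0] by (cases K) auto
  then have "OPT_A S \<le> 1 / real (K+1)" using OPT_A_le_num_present[OF K(3) _ K(4)] by simp
  also have "\<dots> = c * (1 / (c * real (K+1)))" using c by simp
  also have "\<dots> \<le> c * min_dmin S X"
  proof (intro mult_left_mono min_dmin_greatest[OF active_times_nonempty[OF S]])
    fix t' assume "t' \<in> active_times S"
    then obtain i0 where i0: "i0 < length S" "present S i0 t'" unfolding active_times_def by auto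
    show "1 / (c * real (K+1)) \<le> d_min S X t'"
    proof (rule d_min_greatest[OF i0])
      fix i assume "i < length S" "present S i t'"
      then show "1 / (c * real (K+1)) \<le> dist_bd (X i)"
        using sep K(1) pos unfolding prefix_separated_def by blast
    next
      fix i j assume ij: "i < length S" "j < length S" "i \<noteq> j" "present S i t'" "present S j t'"
      then show "1 / (c * real (K+1)) \<le> dist (X i) (X j)"
        using sep K(1) pos alg_run_present_distinct[OF ij] unfolding prefix_separated_def by blast
    qed
  qed (use c in simp)
  finally show ?thesis .
qed

end

theorem lemma2:
  fixes l :: nat
  assumes "l > 0"
  shows "\<exists>tau. distinct tau \<and> set tau = Qset (2^l - 1) \<and>
           (\<forall>S X. valid_instance S \<and> max_simul S \<le> 2^l - 1
                   \<and> alg_run (Qset (2^l - 1)) tau S X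
              \<longrightarrow> OPT_A S \<le> 2 * sigma_r (2^l - 1) * min_dmin S X)"
proof (intro exI conjI allI impI)
  let ?r = "(2::nat)^l - 1"
  let ?tau = "map (qpos ?r) (dyadic_order l l)"
  show "distinct ?tau"
    using distinct_dyadic_order strict_mono_imp_inj_on[OF strict_mono_qpos]
    by (simp add: distinct_map inj_on_subset)
  moreover show Q: "set ?tau = Qset ?r"
    unfolding Qset_def by (simp add: set_dyadic_order_full)
  moreover have "length ?tau = ?r" by (simp add: length_dyadic_order)
  ultimately show "OPT_A S \<le> 2 * sigma_r ?r * min_dmin S X"
    if "valid_instance S \<and> max_simul S \<le> ?r \<and> alg_run (Qset ?r) ?tau S X" for S X
    using that alg_run_competitive[of S ?tau X] prefix_separated_bisection[OF assms] sigma_r_pos[of ?r]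
    by (simp flip: Q)
qed

end
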